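(* If a Hermitian manifold $(M^n,g)$ is Kähler-like, then its torsion $1$-form $\eta$ is holomorphic (i.e. $\overline\partial\eta=0$). Conversely, if $n=2$ and $\eta$ is holomorphic, then $g$ is Kähler-like.
   Context: $(M^n,g)$ is a Hermitian manifold; $\langle\cdot,\cdot\rangle$ is $g$ extended complex-bilinearly. $\nabla^h$ is the Chern connection (unique connection with $\nabla^hg=0$, $\nabla^hJ=0$ and torsion with vanishing $(1,1)$-part), $R^h(X,Y)Z=\nabla^h_X\nabla^h_YZ-\nabla^h_Y\nabla^h_XZ-\nabla^h_{[X,Y]}Z$, $R^h_{XYZW}=\langle R^h(X,Y)Z,W\rangle$ extended complex-multilinearly. For a local unitary frame $e={}^t(e_1,\dots,e_n)$ of $T^{1,0}M$ ($\langle e_i,\overline{e_j}\rangle=\delta_{ij}$) with dual coframe $\varphi$, write $\nabla^he=\theta e$, define $\tau$ by $d\varphi=-{}^t\theta\wedge\varphi+\tau$ and $\tau_i=\sum_{j,k}T^i_{jk}\varphi_j\wedge\varphi_k$ with $T^i_{jk}=-T^i_{kj}$. The torsion $1$-form is $\eta=\sum_{i,j}T^i_{ij}\varphi_j$ (a globally defined $(1,0)$-form). The metric $g$ is called Kähler-like if $R^h_{X\overline YZ\overline W}=R^h_{Z\overline YX\overline W}$ for all type $(1,0)$ tangent vectors $X,Y,Z,W$. *)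

theory Defs
  imports "HOL-Analysis.Analysis"
begin

text \<open>Local (coordinate chart) model of a Hermitian manifold: an open set U of
  complex^'n with holomorphic coordinates z_i = x_i + i y_i, and the metric given by
  the matrix G p i j = g(d/dz_i, d/dzbar_j) at p.\<close>

definition dirderiv :: "complex^'n \<Rightarrow> (complex^'n \<Rightarrow> complex) \<Rightarrow> complex^'n \<Rightarrow> complex" where
  "dirderiv v f p = vector_derivative (\<lambda>t::real. f (p + t *\<^sub>R v)) (at 0)"

definition coord_dirs :: "(complex^'n) set" where
  "coord_dirs = {axis i 1 | i. True} \<union> {axis i \<i> | i. True}"

fun iter_dir :: "(complex^'n) list \<Rightarrow> (complex^'n \<Rightarrow> complex) \<Rightarrow> complex^'n \<Rightarrow> complex" where
  "iter_dir [] f = f"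
| "iter_dir (v # vs) f = dirderiv v (iter_dir vs f)"

definition smooth_on :: "(complex^'n) set \<Rightarrow> (complex^'n \<Rightarrow> complex) \<Rightarrow> bool" where
  "smooth_on U f \<longleftrightarrow>
     (\<forall>vs. set vs \<subseteq> coord_dirs \<longrightarrow>
        continuous_on U (iter_dir vs f) \<and>
        (\<forall>v\<in>coord_dirs. \<forall>p\<in>U.
           ((\<lambda>t::real. iter_dir vs f (p + t *\<^sub>R v)) has_vector_derivative iter_dir (v # vs) f p) (at 0)))"

definition wirt :: "'n \<Rightarrow> (complex^'n \<Rightarrow> complex) \<Rightarrow> complex^'n \<Rightarrow> complex" where
  "wirt i f p = (dirderiv (axis i 1) f p - \<i> * dirderiv (axis i \<i>) f p) / 2"

definition wirtbar :: "'n \<Rightarrow> (complex^'n \<Rightarrow> complex) \<Rightarrow> complex^'n \<Rightarrow> complex" where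
  "wirtbar i f p = (dirderiv (axis i 1) f p + \<i> * dirderiv (axis i \<i>) f p) / 2"

definition hermitian_metric :: "(complex^'n) set \<Rightarrow> (complex^'n \<Rightarrow> 'n \<Rightarrow> 'n \<Rightarrow> complex) \<Rightarrow> bool" where
  "hermitian_metric U G \<longleftrightarrow>
     (\<forall>i j. smooth_on U (\<lambda>p. G p i j)) \<and>
     (\<forall>p\<in>U. \<forall>i j. G p j i = cnj (G p i j)) \<and>
     (\<forall>p\<in>U. \<forall>\<xi>::complex^'n. \<xi> \<noteq> 0 \<longrightarrow>
        Re (\<Sum>i\<in>UNIV. \<Sum>j\<in>UNIV. G p i j * \<xi> $ i * cnj (\<xi> $ j)) > 0)"

text \<open>Inverse metric: Ginv G p l k = h^{bar l k}, i.e. sum_l G p j l * Ginv G p l k = delta_jk.\<close>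
definition Ginv :: "(complex^'n \<Rightarrow> 'n \<Rightarrow> 'n \<Rightarrow> complex) \<Rightarrow> complex^'n \<Rightarrow> 'n \<Rightarrow> 'n \<Rightarrow> complex" where
  "Ginv G p l k = (matrix_inv (\<chi> a b. G p a b)) $ l $ k"

text \<open>Chern connection Christoffel symbols: nabla_{d_i} d_j = sum_k chern_gamma G p i j k * d_k.\<close>
definition chern_gamma :: "(complex^'n \<Rightarrow> 'n \<Rightarrow> 'n \<Rightarrow> complex) \<Rightarrow> complex^'n \<Rightarrow> 'n \<Rightarrow> 'n \<Rightarrow> 'n \<Rightarrow> complex" where
  "chern_gamma G p i j k = (\<Sum>l\<in>UNIV. wirt i (\<lambda>q. G q j l) p * Ginv G p l k)"

text \<open>Coordinate components eta_j = sum_i T^i_{ij} of the torsion 1-form, where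
  T(d_i,d_j) = sum_k (Gamma^k_{ij} - Gamma^k_{ji}) d_k (a nonzero constant multiple of the
  paper's eta, which does not affect holomorphicity).\<close>
definition torsion_form :: "(complex^'n \<Rightarrow> 'n \<Rightarrow> 'n \<Rightarrow> complex) \<Rightarrow> complex^'n \<Rightarrow> 'n \<Rightarrow> complex" where
  "torsion_form G p j = (\<Sum>i\<in>UNIV. chern_gamma G p i j i - chern_gamma G p j i i)"

text \<open>Chern curvature R^h_{i jbar k lbar} = < R(d_i, dbar_j) d_k, dbar_l >.\<close>
definition chern_curv :: "(complex^'n \<Rightarrow> 'n \<Rightarrow> 'n \<Rightarrow> complex) \<Rightarrow> complex^'n \<Rightarrow> 'n \<Rightarrow> 'n \<Rightarrow> 'n \<Rightarrow> 'n \<Rightarrow> complex" where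
  "chern_curv G p i j k l = - (\<Sum>m\<in>UNIV. wirtbar j (\<lambda>q. chern_gamma G q i k m) p * G p m l)"

definition kahler_like :: "(complex^'n) set \<Rightarrow> (complex^'n \<Rightarrow> 'n \<Rightarrow> 'n \<Rightarrow> complex) \<Rightarrow> bool" where
  "kahler_like U G \<longleftrightarrow> (\<forall>p\<in>U. \<forall>i j k l. chern_curv G p i j k l = chern_curv G p k j i l)"

definition eta_holomorphic :: "(complex^'n) set \<Rightarrow> (complex^'n \<Rightarrow> 'n \<Rightarrow> 'n \<Rightarrow> complex) \<Rightarrow> bool" where
  "eta_holomorphic U G \<longleftrightarrow> (\<forall>p\<in>U. \<forall>j k. wirtbar k (\<lambda>q. torsion_form G q j) p = 0)"

end

theory Submission
  imports Defs
begin

text \<open>Write T^m_ik = Gamma^m_ik - Gamma^m_ki for the components of the Chern torsion. From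
  R_{i jbar k lbar} = - sum_m dbar_j Gamma^m_ik g_{m lbar} one gets
  R_{i jbar k lbar} - R_{k jbar i lbar} = - sum_m dbar_j T^m_ik g_{m lbar}, so, g being
  nondegenerate, g is Kahler-like exactly when all torsion components are holomorphic.
  The torsion 1-form eta_k = sum_i T^i_ik is a trace of the torsion, hence is then holomorphic too.
  In dimension 2 the torsion is conversely determined by eta: for i \<noteq> k one has
  T^i_ik = eta_k, T^k_ik = - eta_i, and T^m_ii = 0.
  As dbar is built from vector_derivative, it is additive only on functions with partial
  derivatives; that the Christoffel symbols have them needs, for the inverse metric, Cramer's rule.\<close>

lemma differentiable_prod:
  fixes f :: "'i \<Rightarrow> 'a::real_normed_vector \<Rightarrow> 'b::real_normed_field"
  assumes "\<And>i. i \<in> I \<Longrightarrow> f i differentiable (at x within S)"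
  shows "(\<lambda>x. \<Prod>i\<in>I. f i x) differentiable (at x within S)"
proof -
  obtain f' where "\<And>i. i \<in> I \<Longrightarrow> (f i has_derivative f' i) (at x within S)"
    using assms unfolding differentiable_def by metis
  then show ?thesis
    unfolding differentiable_def by (blast intro: has_derivative_prod)
qed

lemma matrix_inv_entry_cramer:
  fixes A :: "'a::field^'n^'n"
  assumes "det A \<noteq> 0"
  shows "matrix_inv A $ l $ k = det (\<chi> i j. if j = l then axis k 1 $ i else A $ i $ j) / det A"
proof -
  have "A ** matrix_inv A = mat 1"
    using assms unfolding invertible_det_nz[symmetric] invertible_def matrix_inv_def
    by (rule someI_ex[THEN conjunct1])
  then have "A *v (matrix_inv A *v axis k 1) = axis k 1"
    by (simp add: matrix_vector_mul_assoc)
  then have "matrix_inv A *v axis k 1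
      = (\<chi> l. det (\<chi> i j. if j = l then axis k 1 $ i else A $ i $ j) / det A)"
    using cramer[OF assms] by blast
  moreover have "(matrix_inv A *v axis k 1) $ l = matrix_inv A $ l $ k"
    by (simp add: matrix_vector_mult_def axis_def if_distrib cong: if_cong)
  ultimately show ?thesis by simp
qed

definition partially_differentiable :: "(complex^'n \<Rightarrow> complex) \<Rightarrow> complex^'n \<Rightarrow> bool" where
  "partially_differentiable f p \<longleftrightarrow>
     (\<forall>v\<in>coord_dirs. (\<lambda>t::real. f (p + t *\<^sub>R v)) differentiable (at 0))"

lemma axis_in_coord_dirs: "axis i 1 \<in> coord_dirs" "axis i \<i> \<in> coord_dirs"
  unfolding coord_dirs_def by auto

lemma partially_differentiable_const [simp]: "partially_differentiable (\<lambda>q. c) p"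
  unfolding partially_differentiable_def by simp

lemma partially_differentiable_diff:
  "partially_differentiable f p \<Longrightarrow> partially_differentiable g p \<Longrightarrow>
   partially_differentiable (\<lambda>q. f q - g q) p"
  unfolding partially_differentiable_def by simp

lemma partially_differentiable_mult:
  "partially_differentiable f p \<Longrightarrow> partially_differentiable g p \<Longrightarrow>
   partially_differentiable (\<lambda>q. f q * g q) p"
  unfolding partially_differentiable_def by simp

lemma partially_differentiable_divide:
  "partially_differentiable f p \<Longrightarrow> partially_differentiable g p \<Longrightarrow> g p \<noteq> 0 \<Longrightarrow>
   partially_differentiable (\<lambda>q. f q / g q) p"
  unfolding partially_differentiable_def by simp

lemma partially_differentiable_sum:
  "(\<And>a. a \<in> S \<Longrightarrow> partially_differentiable (f a) p) \<Longrightarrow>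
   partially_differentiable (\<lambda>q. \<Sum>a\<in>S. f a q) p"
  unfolding partially_differentiable_def by (cases "finite S") auto

lemma partially_differentiable_prod:
  "(\<And>a. a \<in> S \<Longrightarrow> partially_differentiable (f a) p) \<Longrightarrow>
   partially_differentiable (\<lambda>q. \<Prod>a\<in>S. f a q) p"
  unfolding partially_differentiable_def by (auto intro: differentiable_prod)

lemma partially_differentiable_det:
  "(\<And>i j. partially_differentiable (\<lambda>q. M q $ i $ j) p) \<Longrightarrow>
   partially_differentiable (\<lambda>q. det (M q)) p"
  unfolding det_def
  by (intro partially_differentiable_sum partially_differentiable_mult partially_differentiable_prod)
    simp_all

lemma partially_differentiable_cong_open:
  fixes p :: "complex^'n"
  assumes "open U" "p \<in> U" "\<And>q. q \<in> U \<Longrightarrow> f q = g q" "partially_differentiable f p"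
  shows "partially_differentiable g p"
  unfolding partially_differentiable_def
proof
  fix v :: "complex^'n" assume "v \<in> coord_dirs"
  then obtain D where D: "((\<lambda>t::real. f (p + t *\<^sub>R v)) has_derivative D) (at 0)"
    using assms(4) unfolding partially_differentiable_def differentiable_def by blast
  have "open ((\<lambda>t::real. p + t *\<^sub>R v) -` U)"
    by (rule continuous_open_vimage[OF assms(1)]) (intro continuous_intros)
  with D have "((\<lambda>t::real. g (p + t *\<^sub>R v)) has_derivative D) (at 0)"
    by (rule has_derivative_transform_within_open) (use assms(2,3) in auto)
  then show "(\<lambda>t::real. g (p + t *\<^sub>R v)) differentiable (at 0)"
    unfolding differentiable_def by blast
qed

lemma smooth_on_partially_differentiable:
  fixes p :: "complex^'n"
  assumes "smooth_on U f" "p \<in> U" "set vs \<subseteq> coord_dirs"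
  shows "partially_differentiable (iter_dir vs f) p"
  unfolding partially_differentiable_def
proof
  fix v :: "complex^'n" assume "v \<in> coord_dirs"
  then have "((\<lambda>t::real. iter_dir vs f (p + t *\<^sub>R v)) has_vector_derivative iter_dir (v # vs) f p) (at 0)"
    using assms unfolding smooth_on_def by blast
  then show "(\<lambda>t::real. iter_dir vs f (p + t *\<^sub>R v)) differentiable (at 0)"
    by (rule differentiableI_vector)
qed

lemma dirderiv_has_vector_derivative:
  "partially_differentiable f p \<Longrightarrow> v \<in> coord_dirs \<Longrightarrow>
   ((\<lambda>t::real. f (p + t *\<^sub>R v)) has_vector_derivative dirderiv v f p) (at 0)"
  unfolding partially_differentiable_def dirderiv_def by (simp add: vector_derivative_works)

lemma dirderiv_minus:
  "partially_differentiable f p \<Longrightarrow> v \<in> coord_dirs \<Longrightarrow>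
   dirderiv v (\<lambda>q. - f q) p = - dirderiv v f p"
  unfolding dirderiv_def[of v "\<lambda>q. - f q"]
  by (intro vector_derivative_at has_vector_derivative_minus dirderiv_has_vector_derivative)

lemma dirderiv_diff:
  "partially_differentiable f p \<Longrightarrow> partially_differentiable g p \<Longrightarrow> v \<in> coord_dirs \<Longrightarrow>
   dirderiv v (\<lambda>q. f q - g q) p = dirderiv v f p - dirderiv v g p"
  unfolding dirderiv_def[of v "\<lambda>q. f q - g q"]
  by (intro vector_derivative_at has_vector_derivative_diff dirderiv_has_vector_derivative)

lemma dirderiv_sum:
  "finite S \<Longrightarrow> (\<And>a. a \<in> S \<Longrightarrow> partially_differentiable (f a) p) \<Longrightarrow> v \<in> coord_dirs \<Longrightarrow>
   dirderiv v (\<lambda>q. \<Sum>a\<in>S. f a q) p = (\<Sum>a\<in>S. dirderiv v (f a) p)"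
  unfolding dirderiv_def[of v "\<lambda>q. \<Sum>a\<in>S. f a q"]
  by (intro vector_derivative_at has_vector_derivative_sum dirderiv_has_vector_derivative)

lemma wirtbar_minus:
  "partially_differentiable f p \<Longrightarrow> wirtbar j (\<lambda>q. - f q) p = - wirtbar j f p"
  unfolding wirtbar_def by (simp add: dirderiv_minus axis_in_coord_dirs field_simps)

lemma wirtbar_diff:
  "partially_differentiable f p \<Longrightarrow> partially_differentiable g p \<Longrightarrow>
   wirtbar j (\<lambda>q. f q - g q) p = wirtbar j f p - wirtbar j g p"
  unfolding wirtbar_def by (simp add: dirderiv_diff axis_in_coord_dirs field_simps)

lemma wirtbar_sum:
  "finite S \<Longrightarrow> (\<And>a. a \<in> S \<Longrightarrow> partially_differentiable (f a) p) \<Longrightarrow>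
   wirtbar j (\<lambda>q. \<Sum>a\<in>S. f a q) p = (\<Sum>a\<in>S. wirtbar j (f a) p)"
  unfolding wirtbar_def
  by (simp add: dirderiv_sum axis_in_coord_dirs sum_distrib_left sum.distrib
      add_divide_distrib sum_divide_distrib)

lemma hermitian_metric_nondegenerate:
  fixes G :: "complex^'n \<Rightarrow> 'n \<Rightarrow> 'n \<Rightarrow> complex"
  assumes "hermitian_metric U G" "p \<in> U" "\<And>l. (\<Sum>m\<in>UNIV. c m * G p m l) = 0"
  shows "c m = 0"
proof (rule ccontr)
  assume "c m \<noteq> 0"
  define \<xi> :: "complex^'n" where "\<xi> = (\<chi> i. c i)"
  have "\<xi> \<noteq> 0" using \<open>c m \<noteq> 0\<close> unfolding \<xi>_def by (metis vec_lambda_beta zero_index)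
  then have "Re (\<Sum>i\<in>UNIV. \<Sum>j\<in>UNIV. G p i j * \<xi> $ i * cnj (\<xi> $ j)) > 0"
    using assms(1,2) unfolding hermitian_metric_def by blast
  moreover have "(\<Sum>i\<in>UNIV. \<Sum>j\<in>UNIV. G p i j * \<xi> $ i * cnj (\<xi> $ j))
      = (\<Sum>j\<in>UNIV. (\<Sum>i\<in>UNIV. c i * G p i j) * cnj (c j))"
    unfolding \<xi>_def by (subst sum.swap) (simp add: sum_distrib_right sum_distrib_left mult_ac)
  ultimately show False using assms(3) by simp
qed

lemma hermitian_metric_det_nonzero:
  assumes "hermitian_metric U G" "p \<in> U"
  shows "det (\<chi> a b. G p a b) \<noteq> 0"
proof -
  have "c i = 0" if "(\<Sum>i\<in>UNIV. c i *s row i (\<chi> a b. G p a b)) = 0" for c i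
  proof (rule hermitian_metric_nondegenerate[OF assms])
    fix l
    have "(\<Sum>i\<in>UNIV. c i *s row i (\<chi> a b. G p a b)) $ l = 0" using that by simp
    then show "(\<Sum>m\<in>UNIV. c m * G p m l) = 0" by (simp add: sum_component row_def)
  qed
  then have "invertible (\<chi> a b. G p a b)"
    unfolding invertible_right_inverse matrix_right_invertible_independent_rows by blast
  then show ?thesis using invertible_det_nz by blast
qed

lemma partially_differentiable_metric:
  assumes "hermitian_metric U G" "p \<in> U" "set vs \<subseteq> coord_dirs"
  shows "partially_differentiable (iter_dir vs (\<lambda>q. G q a b)) p"
  using assms unfolding hermitian_metric_def by (blast intro: smooth_on_partially_differentiable)

lemma partially_differentiable_wirt_metric:
  assumes "hermitian_metric U G" "p \<in> U"
  shows "partially_differentiable (wirt i (\<lambda>q. G q a b)) p"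
proof -
  have "partially_differentiable (\<lambda>q. (iter_dir [axis i 1] (\<lambda>q. G q a b) q
      - \<i> * iter_dir [axis i \<i>] (\<lambda>q. G q a b) q) / 2) p"
    by (intro partially_differentiable_divide partially_differentiable_diff
        partially_differentiable_mult partially_differentiable_metric[OF assms])
      (auto simp: axis_in_coord_dirs)
  then show ?thesis unfolding wirt_def[abs_def] by simp
qed

lemma partially_differentiable_Ginv:
  assumes "hermitian_metric U G" "open U" "p \<in> U"
  shows "partially_differentiable (\<lambda>q. Ginv G q l k) p"
proof (rule partially_differentiable_cong_open[OF assms(2,3)])
  have G: "partially_differentiable (\<lambda>q. G q i j) p" for i j
    using partially_differentiable_metric[OF assms(1,3), of "[]"] by simp
  have entry: "partially_differentiable (\<lambda>q. if j = l then c else G q i j) p" for i j c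
    by (cases "j = l") (simp_all add: G)
  show "partially_differentiable (\<lambda>q. det (\<chi> i j. if j = l then axis k 1 $ i else G q i j)
      / det (\<chi> a b. G q a b)) p"
    by (intro partially_differentiable_divide partially_differentiable_det
        hermitian_metric_det_nonzero[OF assms(1,3)]) (simp_all add: G entry)
  show "det (\<chi> i j. if j = l then axis k 1 $ i else G q i j) / det (\<chi> a b. G q a b)
      = Ginv G q l k" if "q \<in> U" for q
    unfolding Ginv_def matrix_inv_entry_cramer[OF hermitian_metric_det_nonzero[OF assms(1) that]]
    by (simp only: vec_lambda_beta)
qed

definition chern_torsion :: "(complex^'n \<Rightarrow> 'n \<Rightarrow> 'n \<Rightarrow> complex) \<Rightarrow> complex^'n \<Rightarrow> 'n \<Rightarrow> 'n \<Rightarrow> 'n \<Rightarrow> complex" where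
  "chern_torsion G p i j k = chern_gamma G p i j k - chern_gamma G p j i k"

lemma torsion_form_eq_trace: "torsion_form G p j = (\<Sum>i\<in>UNIV. chern_torsion G p i j i)"
  unfolding torsion_form_def chern_torsion_def ..

lemma partially_differentiable_chern_gamma:
  assumes "hermitian_metric U G" "open U" "p \<in> U"
  shows "partially_differentiable (\<lambda>q. chern_gamma G q i j k) p"
  unfolding chern_gamma_def
  by (intro partially_differentiable_sum partially_differentiable_mult
      partially_differentiable_wirt_metric[OF assms(1,3)] partially_differentiable_Ginv[OF assms])

lemma partially_differentiable_chern_torsion:
  assumes "hermitian_metric U G" "open U" "p \<in> U"
  shows "partially_differentiable (\<lambda>q. chern_torsion G q i j k) p"
  unfolding chern_torsion_def
  by (intro partially_differentiable_diff partially_differentiable_chern_gamma[OF assms])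

lemma partially_differentiable_torsion_form:
  assumes "hermitian_metric U G" "open U" "p \<in> U"
  shows "partially_differentiable (\<lambda>q. torsion_form G q j) p"
  unfolding torsion_form_eq_trace
  by (intro partially_differentiable_sum partially_differentiable_chern_torsion[OF assms])

lemma chern_curv_swap_diff:
  assumes "hermitian_metric U G" "open U" "p \<in> U"
  shows "chern_curv G p i j k l - chern_curv G p k j i l
       = - (\<Sum>m\<in>UNIV. wirtbar j (\<lambda>q. chern_torsion G q i k m) p * G p m l)"
  unfolding chern_curv_def chern_torsion_def
  by (simp add: wirtbar_diff partially_differentiable_chern_gamma[OF assms]
      left_diff_distrib sum_subtractf)

lemma kahler_like_iff_holomorphic_torsion:
  assumes "hermitian_metric U G" "open U"
  shows "kahler_like U G \<longleftrightarrow>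
    (\<forall>p\<in>U. \<forall>i j k m. wirtbar j (\<lambda>q. chern_torsion G q i k m) p = 0)"
  unfolding kahler_like_def
proof (intro ball_cong[OF refl] iffI allI)
  fix p i j k m
  assume "p \<in> U" and "\<forall>i j k l. chern_curv G p i j k l = chern_curv G p k j i l"
  then have "(\<Sum>m\<in>UNIV. wirtbar j (\<lambda>q. chern_torsion G q i k m) p * G p m l) = 0" for l
    using chern_curv_swap_diff[OF assms \<open>p \<in> U\<close>, of i j k l] by simp
  then show "wirtbar j (\<lambda>q. chern_torsion G q i k m) p = 0"
    by (rule hermitian_metric_nondegenerate[OF assms(1) \<open>p \<in> U\<close>])
next
  fix p i j k l
  assume "p \<in> U" and "\<forall>i j k m. wirtbar j (\<lambda>q. chern_torsion G q i k m) p = 0"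
  then show "chern_curv G p i j k l = chern_curv G p k j i l"
    using chern_curv_swap_diff[OF assms \<open>p \<in> U\<close>, of i j k l] by simp
qed

lemma holomorphic_torsion_imp_eta_holomorphic:
  assumes "hermitian_metric U G" "open U"
    and "\<forall>p\<in>U. \<forall>i j k m. wirtbar j (\<lambda>q. chern_torsion G q i k m) p = 0"
  shows "eta_holomorphic U G"
  unfolding eta_holomorphic_def torsion_form_eq_trace
  using assms(3) by (simp add: wirtbar_sum partially_differentiable_chern_torsion[OF assms(1,2)])

lemma UNIV_eq_pair_if_card_2:
  assumes "CARD('a::finite) = 2" "x \<noteq> y"
  shows "UNIV = {x, y :: 'a}"
  using assms by (intro card_subset_eq[symmetric]) auto

lemma chern_torsion_dim2:
  fixes G :: "complex^'n \<Rightarrow> 'n \<Rightarrow> 'n \<Rightarrow> complex"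
  assumes "CARD('n) = 2" "i \<noteq> k"
  shows "chern_torsion G p i k i = torsion_form G p k"
  unfolding torsion_form_eq_trace UNIV_eq_pair_if_card_2[OF assms]
  using assms(2) by (simp add: chern_torsion_def)

lemma eta_holomorphic_imp_holomorphic_torsion_dim2:
  fixes G :: "complex^'n \<Rightarrow> 'n \<Rightarrow> 'n \<Rightarrow> complex"
  assumes "hermitian_metric U G" "open U" "CARD('n) = 2" "eta_holomorphic U G" "p \<in> U"
  shows "wirtbar j (\<lambda>q. chern_torsion G q i k m) p = 0"
proof (cases "i = k")
  case True
  then show ?thesis
    by (simp add: chern_torsion_def wirtbar_def dirderiv_def vector_derivative_const_at)
next
  case False
  have eta: "wirtbar j (\<lambda>q. torsion_form G q a) p = 0" for a
    using assms(4,5) unfolding eta_holomorphic_def by blast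
  have "m \<in> {i, k}"
    using UNIV_eq_pair_if_card_2[OF assms(3) False] by blast
  then consider "m = i" | "m = k" by blast
  then show ?thesis
  proof cases
    case 1
    then show ?thesis using chern_torsion_dim2[OF assms(3) False] eta by simp
  next
    case 2
    have "chern_torsion G q i k m = - torsion_form G q i" for q
      using chern_torsion_dim2[OF assms(3), of k i G q] False 2
      unfolding chern_torsion_def by (metis minus_diff_eq)
    then show ?thesis
      using wirtbar_minus[OF partially_differentiable_torsion_form[OF assms(1,2,5)]] eta by simp
  qed
qed

theorem lemma6:
  fixes U :: "(complex^'n) set"
    and G :: "complex^'n \<Rightarrow> 'n \<Rightarrow> 'n \<Rightarrow> complex"
  assumes "open U"
    and "hermitian_metric U G"
  shows "(kahler_like U G \<longrightarrow> eta_holomorphic U G) \<and>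
         (CARD('n) = 2 \<and> eta_holomorphic U G \<longrightarrow> kahler_like U G)"
  using kahler_like_iff_holomorphic_torsion[OF assms(2,1)]
    holomorphic_torsion_imp_eta_holomorphic[OF assms(2,1)]
    eta_holomorphic_imp_holomorphic_torsion_dim2[OF assms(2,1)]
  by blast

end
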